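(* Let $S$ be a qubit with Hamiltonian $H_S=E|1\rangle\langle 1|$, $E>0$, and let $\beta>0$. Assume the initial state of $S$ is diagonal in the energy eigenbasis with $p^{(0)}_0\ge p^{(0)}_1$. Then the optimal cooling protocol in $\mathcal{P}_\emptyset$ (maximizing the ground state population $p_0^{(k)}$ after every number $k$ of rounds) is the one in which in each round (1) the Pauli $X$ unitary is applied to $S$ and (2) the $\beta$-swap $\Lambda_\beta$ is applied to $S$. The ground state population after round $k$ is $p^{(k)}_0=1-e^{-k\beta E}(1-p^{(0)}_0)$, and $p^{(k)}_0\to1$ as $k\to\infty$.
   Context: A dephasing thermalization on $S$ is a quantum channel $\Lambda$ with $\Lambda(\tau_S)=\tau_S$, where $\tau_S=e^{-\beta H_S}/\mathrm{tr}[e^{-\beta H_S}]$, and $\langle 0|\Lambda(\rho)|1\rangle=0$ for all $\rho$. The protocol class $\mathcal{P}_\emptyset$ (no auxiliary systems): each round $k$ consists of an arbitrary unitary $U^{(k)}$ applied to $S$ followed by an arbitrary dephasing thermalization $\Lambda^{(k)}$ applied to $S$, so $\rho_S^{(k)}=\Lambda^{(k)}(U^{(k)}\rho_S^{(k-1)}U^{(k)\dagger})$; $p_0^{(k)}=\langle0|\rho_S^{(k)}|0\rangle$. The $\beta$-swap is the channel $\Lambda_\beta(\rho)=\sigma_-\rho\sigma_++e^{-\beta E}\sigma_+\rho\sigma_-+(1-e^{-\beta E})\sigma_-\sigma_+\rho\sigma_-\sigma_+$ with $\sigma_+=|1\rangle\langle0|$, $\sigma_-=|0\rangle\langle 1|$;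 it satisfies $\langle0|\Lambda_\beta(|1\rangle\langle1|)|0\rangle=1$ and $\langle1|\Lambda_\beta(|0\rangle\langle0|)|1\rangle=e^{-\beta E}$. *)

theory Defs
  imports "HOL-Analysis.Analysis"
begin

text \<open>Qubit operators are 2x2 complex matrices of type complex^2^2.
  The energy eigenbasis: index 1 is the ground state |0>, index 2 is the excited state |1>.\<close>

type_synonym qop = "complex^2^2"

definition adj :: "qop \<Rightarrow> qop" where
  "adj A = (\<chi> i j. cnj (A $ j $ i))"

definition unitary_op :: "qop \<Rightarrow> bool" where
  "unitary_op U \<longleftrightarrow> adj U ** U = mat 1 \<and> U ** adj U = mat 1"

definition trace_op :: "qop \<Rightarrow> complex" where
  "trace_op A = (\<Sum>i\<in>UNIV. A $ i $ i)"

definition density :: "qop \<Rightarrow> bool" where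
  "density \<rho> \<longleftrightarrow>
     (\<forall>v::complex^2. Im (\<Sum>i\<in>UNIV. cnj (v $ i) * (\<rho> *v v) $ i) = 0 \<and>
                      Re (\<Sum>i\<in>UNIV. cnj (v $ i) * (\<rho> *v v) $ i) \<ge> 0)
     \<and> trace_op \<rho> = 1"

definition quantum_channel :: "(qop \<Rightarrow> qop) \<Rightarrow> bool" where
  "quantum_channel \<Lambda> \<longleftrightarrow>
     (\<exists>Ks::qop list. (\<forall>\<rho>. \<Lambda> \<rho> = sum_list (map (\<lambda>K. K ** \<rho> ** adj K) Ks)) \<and>
                     sum_list (map (\<lambda>K. adj K ** K) Ks) = mat 1)"

definition gibbs :: "real \<Rightarrow> real \<Rightarrow> qop" where
  "gibbs \<beta> E = (\<chi> i j. if i = j then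
       complex_of_real ((if i = 1 then 1 else exp (- \<beta> * E)) / (1 + exp (- \<beta> * E)))
     else 0)"

definition dephasing_thermalization :: "real \<Rightarrow> real \<Rightarrow> (qop \<Rightarrow> qop) \<Rightarrow> bool" where
  "dephasing_thermalization \<beta> E \<Lambda> \<longleftrightarrow>
     quantum_channel \<Lambda> \<and> \<Lambda> (gibbs \<beta> E) = gibbs \<beta> E \<and>
     (\<forall>\<rho>. density \<rho> \<longrightarrow> \<Lambda> \<rho> $ 1 $ 2 = 0)"

text \<open>sigma_plus = |1><0|, sigma_minus = |0><1|.\<close>
definition sigma_plus :: qop where
  "sigma_plus = (\<chi> i j. if i = 2 \<and> j = 1 then 1 else 0)"

definition sigma_minus :: qop where
  "sigma_minus = (\<chi> i j. if i = 1 \<and> j = 2 then 1 else 0)"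

definition beta_swap :: "real \<Rightarrow> real \<Rightarrow> qop \<Rightarrow> qop" where
  "beta_swap \<beta> E \<rho> =
     sigma_minus ** \<rho> ** sigma_plus
     + exp (- \<beta> * E) *\<^sub>R (sigma_plus ** \<rho> ** sigma_minus)
     + (1 - exp (- \<beta> * E)) *\<^sub>R
         ((sigma_minus ** sigma_plus) ** \<rho> ** (sigma_minus ** sigma_plus))"

definition pauliX :: qop where
  "pauliX = (\<chi> i j. if i \<noteq> j then 1 else 0)"

text \<open>State after k rounds of a protocol in P_empty: round j (j \<ge> 1) applies
  unitary U j and then channel L j.\<close>
primrec state :: "(nat \<Rightarrow> qop) \<Rightarrow> (nat \<Rightarrow> qop \<Rightarrow> qop) \<Rightarrow> qop \<Rightarrow> nat \<Rightarrow> qop" where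
  "state U L \<rho>0 0 = \<rho>0"
| "state U L \<rho>0 (Suc k) = L (Suc k) (U (Suc k) ** state U L \<rho>0 k ** adj (U (Suc k)))"

definition p0 :: "qop \<Rightarrow> real" where
  "p0 \<rho> = Re (\<rho> $ 1 $ 1)"

end

theory Submission imports Defs begin

text \<open>Write e = exp(-\<beta>E). A channel L fixing the Gibbs state, which is proportional to
  |0><0| + e|1><1|, is linear and positive, so L(1) = e 1 + (1 - e)(|0><0| + L |1><1|) \<ge> e 1.
  Unitaries fix the identity, so a lower bound \<rho> \<ge> \<lambda> 1 turns into \<rho> \<ge> e^k \<lambda> 1 after k rounds
  of any protocol. Starting from \<lambda> = p1(0), which is allowed because \<rho>(0) is diagonal with
  p0(0) \<ge> p1(0), this gives p1 \<ge> e^k p1(0) for every protocol. The X-then-\<beta>-swap protocol maps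
  (p0, p1) to (p0 + (1 - e) p1, e p1) and so attains the bound.\<close>

lemmas qop_entrywise = vec_eq_iff forall_2 sum_2 matrix_matrix_mult_def matrix_vector_mult_def
  adj_def trace_op_def mat_def

definition qform :: "complex^'n^'n \<Rightarrow> complex^'n \<Rightarrow> complex" where
  "qform A v = (\<Sum>i\<in>UNIV. cnj (v $ i) * (A *v v) $ i)"

definition psd :: "complex^'n^'n \<Rightarrow> bool" where
  "psd A \<longleftrightarrow> (\<forall>v. Im (qform A v) = 0 \<and> Re (qform A v) \<ge> 0)"

lemma density_iff_psd: "density \<rho> \<longleftrightarrow> psd \<rho> \<and> trace_op \<rho> = 1"
  unfolding density_def psd_def qform_def by simp

lemma qform_add: "qform (A + B) v = qform A v + qform B v"
  by (simp add: qform_def matrix_vector_mult_add_rdistrib sum.distrib distrib_left)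

lemma qform_scaleR: "qform (c *\<^sub>R A) v = complex_of_real c * qform A v"
  by (simp add: qform_def matrix_vector_mult_def sum_distrib_left
      scaleR_conv_of_real[where 'a = complex] algebra_simps del: of_real_mult)

lemma psd_zero: "psd 0"
  by (simp add: psd_def qform_def matrix_vector_mult_def)

lemma psd_add: "psd A \<Longrightarrow> psd B \<Longrightarrow> psd (A + B)"
  by (simp add: psd_def qform_add)

lemma psd_scaleR: "psd A \<Longrightarrow> 0 \<le> c \<Longrightarrow> psd (c *\<^sub>R A)"
  by (simp add: psd_def qform_scaleR)

lemma qform_conj: "qform (K ** X ** adj K) v = qform X (adj K *v v)"
  by (simp add: qform_def qop_entrywise algebra_simps)

lemma psd_conj: "psd X \<Longrightarrow> psd (K ** X ** adj K)"
  by (simp add: psd_def qform_conj)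

lemma psd_diag:
  assumes "psd A"
  shows "Im (A $ i $ i) = 0" "0 \<le> Re (A $ i $ i)"
proof -
  have "qform A (axis i 1) = A $ i $ i"
    by (simp add: qform_def matrix_vector_mult_def axis_def if_distrib[of cnj] mult_if_delta
        if_distrib[of "\<lambda>x. _ * x"] cong: if_cong)
  with assms show "Im (A $ i $ i) = 0" "0 \<le> Re (A $ i $ i)"
    unfolding psd_def by metis+
qed

lemma trace_op_add: "trace_op (A + B) = trace_op A + trace_op B"
  by (simp add: qop_entrywise)

lemma trace_op_conj: "trace_op (K ** X ** adj K) = trace_op ((adj K ** K) ** X)"
  by (simp add: qop_entrywise algebra_simps)

lemma density_Re_diag_sum: "density \<rho> \<Longrightarrow> Re (\<rho> $ 1 $ 1) + Re (\<rho> $ 2 $ 2) = 1"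
  by (simp add: density_iff_psd qop_entrywise complex_eq_iff)

subsection \<open>Kraus maps and quantum channels\<close>

definition kraus_map :: "qop list \<Rightarrow> qop \<Rightarrow> qop" where
  "kraus_map Ks X = sum_list (map (\<lambda>K. K ** X ** adj K) Ks)"

lemma kraus_map_add: "kraus_map Ks (A + B) = kraus_map Ks A + kraus_map Ks B"
proof (induction Ks)
  case Nil
  then show ?case by (simp add: kraus_map_def)
next
  case (Cons K Ks)
  have "K ** (A + B) ** adj K = K ** A ** adj K + K ** B ** adj K"
    by (simp add: qop_entrywise algebra_simps)
  with Cons show ?case by (simp add: kraus_map_def algebra_simps)
qed

lemma kraus_map_scaleR: "kraus_map Ks (c *\<^sub>R A) = c *\<^sub>R kraus_map Ks A"
proof (induction Ks)
  case Nil
  then show ?case by (simp add: kraus_map_def)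
next
  case (Cons K Ks)
  have "K ** (c *\<^sub>R A) ** adj K = c *\<^sub>R (K ** A ** adj K)"
    by (simp add: qop_entrywise algebra_simps)
  with Cons show ?case by (simp add: kraus_map_def algebra_simps)
qed

lemma psd_kraus_map: "psd A \<Longrightarrow> psd (kraus_map Ks A)"
  by (induction Ks) (simp_all add: kraus_map_def psd_zero psd_add psd_conj)

lemma trace_op_kraus_map:
  "trace_op (kraus_map Ks X) = trace_op (sum_list (map (\<lambda>K. adj K ** K) Ks) ** X)"
proof (induction Ks)
  case Nil
  then show ?case by (simp add: kraus_map_def qop_entrywise)
next
  case (Cons K Ks)
  have "trace_op ((adj K ** K + sum_list (map (\<lambda>K. adj K ** K) Ks)) ** X)
      = trace_op ((adj K ** K) ** X) + trace_op (sum_list (map (\<lambda>K. adj K ** K) Ks) ** X)"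
    by (simp add: qop_entrywise algebra_simps)
  with Cons show ?case by (simp add: kraus_map_def trace_op_add trace_op_conj)
qed

lemma quantum_channel_iff_kraus_map:
  "quantum_channel L \<longleftrightarrow>
     (\<exists>Ks. L = kraus_map Ks \<and> sum_list (map (\<lambda>K. adj K ** K) Ks) = mat 1)"
  unfolding quantum_channel_def kraus_map_def by (simp add: fun_eq_iff)

lemma quantum_channel_add: "quantum_channel L \<Longrightarrow> L (A + B) = L A + L B"
  by (auto simp: quantum_channel_iff_kraus_map kraus_map_add)

lemma quantum_channel_scaleR: "quantum_channel L \<Longrightarrow> L (c *\<^sub>R A) = c *\<^sub>R L A"
  by (auto simp: quantum_channel_iff_kraus_map kraus_map_scaleR)

lemma quantum_channel_psd: "quantum_channel L \<Longrightarrow> psd A \<Longrightarrow> psd (L A)"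
  by (auto simp: quantum_channel_iff_kraus_map psd_kraus_map)

lemma quantum_channel_trace: "quantum_channel L \<Longrightarrow> trace_op (L A) = trace_op A"
  by (auto simp: quantum_channel_iff_kraus_map trace_op_kraus_map)

lemma quantum_channel_density: "quantum_channel L \<Longrightarrow> density \<rho> \<Longrightarrow> density (L \<rho>)"
  by (simp add: density_iff_psd quantum_channel_psd quantum_channel_trace)

lemma unitary_conj_density: "unitary_op U \<Longrightarrow> density \<rho> \<Longrightarrow> density (U ** \<rho> ** adj U)"
  by (simp add: density_iff_psd psd_conj trace_op_conj unitary_op_def)

lemma unitary_conj_psd_minus_mat_1:
  assumes "unitary_op U" "psd (\<rho> - c *\<^sub>R mat 1)"
  shows "psd (U ** \<rho> ** adj U - c *\<^sub>R mat 1)"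
proof -
  have "U ** (\<rho> - c *\<^sub>R mat 1) ** adj U = U ** \<rho> ** adj U - c *\<^sub>R (U ** adj U)"
    by (simp add: qop_entrywise algebra_simps)
  with assms show ?thesis
    using psd_conj[of "\<rho> - c *\<^sub>R mat 1" U] by (simp add: unitary_op_def)
qed

subsection \<open>Channels preserving the Gibbs state\<close>

definition ground_proj :: qop where
  "ground_proj = (\<chi> i j. if i = 1 \<and> j = 1 then 1 else 0)"

definition excited_proj :: qop where
  "excited_proj = (\<chi> i j. if i = 2 \<and> j = 2 then 1 else 0)"

lemma psd_ground_proj: "psd ground_proj"
  by (simp add: psd_def qform_def qop_entrywise ground_proj_def complex_mult_cnj
      mult.commute[of "cnj _"])

lemma psd_excited_proj: "psd excited_proj"
  by (simp add: psd_def qform_def qop_entrywise excited_proj_def complex_mult_cnj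
      mult.commute[of "cnj _"])

lemma mat_1_eq_proj_sum: "(mat 1 :: qop) = ground_proj + excited_proj"
  by (simp add: qop_entrywise ground_proj_def excited_proj_def)

lemma gibbs_eq_proj_sum:
  "gibbs \<beta> E = (1 / (1 + exp (- \<beta> * E))) *\<^sub>R (ground_proj + exp (- \<beta> * E) *\<^sub>R excited_proj)"
  by (simp add: qop_entrywise ground_proj_def excited_proj_def gibbs_def)
    (simp add: scaleR_conv_of_real)

lemma gibbs_preserving_channel_mat_1_ge:
  assumes L: "quantum_channel L" "L (gibbs \<beta> E) = gibbs \<beta> E" and "0 \<le> \<beta> * E"
  shows "psd (L (mat 1) - exp (- \<beta> * E) *\<^sub>R mat 1)"
proof -
  define e where "e = exp (- \<beta> * E)"
  have e: "0 < e" "e \<le> 1"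
    using \<open>0 \<le> \<beta> * E\<close> by (simp_all add: e_def)
  note add = quantum_channel_add[OF L(1)] and scale = quantum_channel_scaleR[OF L(1)]
  have "(1 / (1 + e)) *\<^sub>R L (ground_proj + e *\<^sub>R excited_proj)
      = (1 / (1 + e)) *\<^sub>R (ground_proj + e *\<^sub>R excited_proj)"
    using L(2) by (simp only: gibbs_eq_proj_sum scale e_def)
  then have "L ground_proj + e *\<^sub>R L excited_proj = ground_proj + e *\<^sub>R excited_proj"
    using e by (simp add: add scale)
  then have "L (mat 1) - e *\<^sub>R mat 1 = (1 - e) *\<^sub>R (ground_proj + L excited_proj)"
    by (simp add: mat_1_eq_proj_sum add algebra_simps)
  moreover have "psd ((1 - e) *\<^sub>R (ground_proj + L excited_proj))"
    using e quantum_channel_psd[OF L(1) psd_excited_proj]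
    by (intro psd_scaleR psd_add psd_ground_proj) auto
  ultimately show ?thesis
    by (simp add: e_def)
qed

lemma gibbs_preserving_channel_psd_minus_mat_1:
  assumes L: "quantum_channel L" "L (gibbs \<beta> E) = gibbs \<beta> E" "0 \<le> \<beta> * E"
    and "psd (\<tau> - c *\<^sub>R mat 1)" "0 \<le> c"
  shows "psd (L \<tau> - (exp (- \<beta> * E) * c) *\<^sub>R mat 1)"
proof -
  have "L \<tau> = L (\<tau> - c *\<^sub>R mat 1) + c *\<^sub>R L (mat 1)"
    using quantum_channel_add[OF L(1), of "\<tau> - c *\<^sub>R mat 1" "c *\<^sub>R mat 1"]
    by (simp add: quantum_channel_scaleR[OF L(1)])
  then have "L \<tau> - (exp (- \<beta> * E) * c) *\<^sub>R mat 1
      = L (\<tau> - c *\<^sub>R mat 1) + c *\<^sub>R (L (mat 1) - exp (- \<beta> * E) *\<^sub>R mat 1)"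
    by (simp add: algebra_simps)
  moreover have "psd (L (\<tau> - c *\<^sub>R mat 1))"
    using quantum_channel_psd[OF L(1)] assms(4) .
  ultimately show ?thesis
    using gibbs_preserving_channel_mat_1_ge[OF L] \<open>0 \<le> c\<close> by (simp add: psd_add psd_scaleR)
qed

subsection \<open>Arbitrary protocols\<close>

lemma density_state:
  assumes "\<forall>j. unitary_op (U j) \<and> quantum_channel (L j)" "density \<rho>0"
  shows "density (state U L \<rho>0 k)"
  using assms by (induction k) (simp_all add: quantum_channel_density unitary_conj_density)

lemma state_psd_minus_mat_1:
  assumes "\<forall>j. unitary_op (U j) \<and> quantum_channel (L j) \<and> L j (gibbs \<beta> E) = gibbs \<beta> E"
    and "0 \<le> \<beta> * E" "psd (\<rho>0 - \<mu> *\<^sub>R mat 1)" "0 \<le> \<mu>"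
  shows "psd (state U L \<rho>0 k - (exp (- \<beta> * E) ^ k * \<mu>) *\<^sub>R mat 1)"
proof (induction k)
  case 0
  then show ?case using assms(3) by simp
next
  case (Suc k)
  have "psd (U (Suc k) ** state U L \<rho>0 k ** adj (U (Suc k))
      - (exp (- \<beta> * E) ^ k * \<mu>) *\<^sub>R mat 1)"
    using assms(1) Suc.IH by (intro unitary_conj_psd_minus_mat_1) auto
  moreover have "0 \<le> exp (- \<beta> * E) ^ k * \<mu>"
    using assms(4) by simp
  ultimately have "psd (state U L \<rho>0 (Suc k)
      - (exp (- \<beta> * E) * (exp (- \<beta> * E) ^ k * \<mu>)) *\<^sub>R mat 1)"
    using assms(1,2) gibbs_preserving_channel_psd_minus_mat_1 by simp
  then show ?case
    by (simp add: mult.assoc)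
qed

lemma p0_le_of_psd_minus_mat_1:
  assumes "density \<sigma>" "psd (\<sigma> - \<mu> *\<^sub>R mat 1)"
  shows "p0 \<sigma> \<le> 1 - \<mu>"
  using psd_diag(2)[OF assms(2), of 2] density_Re_diag_sum[OF assms(1)]
  by (simp add: p0_def mat_def)

lemma p0_state_le:
  assumes "\<forall>j. unitary_op (U j) \<and> quantum_channel (L j) \<and> L j (gibbs \<beta> E) = gibbs \<beta> E"
    and "0 \<le> \<beta> * E" "density \<rho>0" "psd (\<rho>0 - \<mu> *\<^sub>R mat 1)" "0 \<le> \<mu>"
  shows "p0 (state U L \<rho>0 k) \<le> 1 - exp (- \<beta> * E) ^ k * \<mu>"
proof (rule p0_le_of_psd_minus_mat_1)
  show "density (state U L \<rho>0 k)"
    using assms(1,3) by (intro density_state) auto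
  show "psd (state U L \<rho>0 k - (exp (- \<beta> * E) ^ k * \<mu>) *\<^sub>R mat 1)"
    using assms(1,2,4,5) by (rule state_psd_minus_mat_1)
qed

lemma diagonal_psd_minus_mat_1:
  fixes \<rho> :: qop
  assumes "psd \<rho>" "\<rho> $ 1 $ 2 = 0" "\<rho> $ 2 $ 1 = 0" "Re (\<rho> $ 2 $ 2) \<le> Re (\<rho> $ 1 $ 1)"
  shows "psd (\<rho> - Re (\<rho> $ 2 $ 2) *\<^sub>R mat 1)"
proof -
  have "\<rho> - Re (\<rho> $ 2 $ 2) *\<^sub>R mat 1 = (Re (\<rho> $ 1 $ 1) - Re (\<rho> $ 2 $ 2)) *\<^sub>R ground_proj"
    using psd_diag(1)[OF assms(1)] assms(2,3)
    by (simp add: qop_entrywise ground_proj_def complex_eq_iff)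
  with assms(4) show ?thesis
    by (simp add: psd_scaleR psd_ground_proj)
qed

subsection \<open>The X-then-\<beta>-swap protocol\<close>

lemma pauliX_unitary: "unitary_op pauliX"
  by (simp add: unitary_op_def qop_entrywise pauliX_def)

lemma pauliX_conj_diag:
  "(pauliX ** \<rho> ** adj pauliX) $ 1 $ 1 = \<rho> $ 2 $ 2"
  "(pauliX ** \<rho> ** adj pauliX) $ 2 $ 2 = \<rho> $ 1 $ 1"
  by (simp_all add: qop_entrywise pauliX_def)

lemma beta_swap_entries:
  "beta_swap \<beta> E \<rho> $ 1 $ 1 = \<rho> $ 2 $ 2 + complex_of_real (1 - exp (- \<beta> * E)) * \<rho> $ 1 $ 1"
  "beta_swap \<beta> E \<rho> $ 2 $ 2 = complex_of_real (exp (- \<beta> * E)) * \<rho> $ 1 $ 1"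
  "beta_swap \<beta> E \<rho> $ 1 $ 2 = 0"
  "beta_swap \<beta> E \<rho> $ 2 $ 1 = 0"
  by (simp_all add: beta_swap_def qop_entrywise sigma_plus_def sigma_minus_def)
    (simp_all add: scaleR_conv_of_real del: of_real_exp)

lemma beta_swap_eq_kraus_map:
  assumes "exp (- \<beta> * E) \<le> 1"
  shows "beta_swap \<beta> E = kraus_map [sigma_minus, sqrt (exp (- \<beta> * E)) *\<^sub>R sigma_plus,
    sqrt (1 - exp (- \<beta> * E)) *\<^sub>R (sigma_minus ** sigma_plus)]"
proof -
  have "(c *\<^sub>R K) ** X ** adj (c *\<^sub>R K) = (c * c) *\<^sub>R (K ** X ** adj K)" for c K X
    by (simp add: qop_entrywise algebra_simps)
  moreover have "adj sigma_minus = sigma_plus" "adj sigma_plus = sigma_minus"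
    "adj (sigma_minus ** sigma_plus) = sigma_minus ** sigma_plus"
    by (simp_all add: qop_entrywise sigma_plus_def sigma_minus_def)
  ultimately show ?thesis
    using assms by (simp add: fun_eq_iff kraus_map_def beta_swap_def add.assoc)
qed

lemma quantum_channel_beta_swap:
  assumes "0 \<le> \<beta> * E"
  shows "quantum_channel (beta_swap \<beta> E)"
proof -
  define e where "e = exp (- \<beta> * E)"
  have e: "0 < e" "e \<le> 1"
    using assms by (simp_all add: e_def)
  have "adj (c *\<^sub>R K) ** (c *\<^sub>R K) = (c * c) *\<^sub>R (adj K ** K)" for c K
    by (simp add: qop_entrywise algebra_simps)
  moreover have "adj sigma_minus ** sigma_minus = excited_proj"
    "adj sigma_plus ** sigma_plus = ground_proj"
    "adj (sigma_minus ** sigma_plus) ** (sigma_minus ** sigma_plus) = ground_proj"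
    by (simp_all add: qop_entrywise sigma_plus_def sigma_minus_def ground_proj_def
        excited_proj_def)
  ultimately have "sum_list (map (\<lambda>K. adj K ** K) [sigma_minus, sqrt e *\<^sub>R sigma_plus,
      sqrt (1 - e) *\<^sub>R (sigma_minus ** sigma_plus)]) = mat 1"
    using e by (simp add: mat_1_eq_proj_sum algebra_simps)
  with e show ?thesis
    unfolding quantum_channel_iff_kraus_map e_def using beta_swap_eq_kraus_map by blast
qed

lemma beta_swap_gibbs: "beta_swap \<beta> E (gibbs \<beta> E) = gibbs \<beta> E"
proof -
  have "1 + exp (- \<beta> * E) \<noteq> 0"
    using exp_gt_zero[of "- \<beta> * E"] by linarith
  then have "1 + complex_of_real (exp (- \<beta> * E)) \<noteq> 0"
    by (metis of_real_1 of_real_add of_real_eq_0_iff)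
  then show ?thesis
    by (simp add: vec_eq_iff forall_2 beta_swap_entries gibbs_def field_simps del: of_real_exp)
qed

lemma dephasing_thermalization_beta_swap:
  "0 \<le> \<beta> * E \<Longrightarrow> dephasing_thermalization \<beta> E (beta_swap \<beta> E)"
  by (simp add: dephasing_thermalization_def quantum_channel_beta_swap beta_swap_gibbs
      beta_swap_entries)

lemma swap_protocol_diag:
  "state (\<lambda>_. pauliX) (\<lambda>_. beta_swap \<beta> E) \<rho>0 k $ 1 $ 1
     = \<rho>0 $ 1 $ 1 + complex_of_real (1 - exp (- \<beta> * E) ^ k) * \<rho>0 $ 2 $ 2"
  "state (\<lambda>_. pauliX) (\<lambda>_. beta_swap \<beta> E) \<rho>0 k $ 2 $ 2
     = complex_of_real (exp (- \<beta> * E) ^ k) * \<rho>0 $ 2 $ 2"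
  by (induction k) (simp_all add: beta_swap_entries pauliX_conj_diag algebra_simps del: of_real_exp)

lemma p0_swap_protocol:
  assumes "density \<rho>0"
  shows "p0 (state (\<lambda>_. pauliX) (\<lambda>_. beta_swap \<beta> E) \<rho>0 k)
    = 1 - exp (- real k * \<beta> * E) * (1 - p0 \<rho>0)"
proof -
  have Re_ground: "Re (\<rho>0 $ 1 $ 1) = 1 - Re (\<rho>0 $ 2 $ 2)"
    using density_Re_diag_sum[OF assms] by simp
  have "p0 (state (\<lambda>_. pauliX) (\<lambda>_. beta_swap \<beta> E) \<rho>0 k)
      = Re (\<rho>0 $ 1 $ 1) + (1 - exp (- \<beta> * E) ^ k) * Re (\<rho>0 $ 2 $ 2)"
    by (simp add: p0_def swap_protocol_diag del: of_real_exp)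
  also have "\<dots> = 1 - exp (- \<beta> * E) ^ k * (1 - p0 \<rho>0)"
    by (simp add: p0_def Re_ground algebra_simps)
  also have "exp (- \<beta> * E) ^ k = exp (- real k * \<beta> * E)"
    by (simp add: exp_of_nat_mult[symmetric] mult.assoc)
  finally show ?thesis .
qed

theorem corollary1:
  fixes E \<beta> :: real and \<rho>0 :: qop
  assumes "E > 0" and "\<beta> > 0"
    and "density \<rho>0"
    and "\<rho>0 $ 1 $ 2 = 0" and "\<rho>0 $ 2 $ 1 = 0"
    and "Re (\<rho>0 $ 1 $ 1) \<ge> Re (\<rho>0 $ 2 $ 2)"
  shows "unitary_op pauliX \<and> dephasing_thermalization \<beta> E (beta_swap \<beta> E)
    \<and> (\<forall>(U::nat \<Rightarrow> qop) (L::nat \<Rightarrow> qop \<Rightarrow> qop) k.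
          (\<forall>j. unitary_op (U j) \<and> dephasing_thermalization \<beta> E (L j)) \<longrightarrow>
          p0 (state U L \<rho>0 k) \<le> p0 (state (\<lambda>_. pauliX) (\<lambda>_. beta_swap \<beta> E) \<rho>0 k))
    \<and> (\<forall>k. p0 (state (\<lambda>_. pauliX) (\<lambda>_. beta_swap \<beta> E) \<rho>0 k)
            = 1 - exp (- real k * \<beta> * E) * (1 - p0 \<rho>0))
    \<and> (\<lambda>k. p0 (state (\<lambda>_. pauliX) (\<lambda>_. beta_swap \<beta> E) \<rho>0 k)) \<longlonglongrightarrow> 1"
proof -
  have "0 \<le> \<beta> * E" "exp (- \<beta> * E) < 1"
    using assms(1,2) by simp_all
  have swap: "p0 (state (\<lambda>_. pauliX) (\<lambda>_. beta_swap \<beta> E) \<rho>0 k)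
      = 1 - exp (- \<beta> * E) ^ k * Re (\<rho>0 $ 2 $ 2)" for k
    using p0_swap_protocol[OF assms(3)] density_Re_diag_sum[OF assms(3)]
    by (simp add: p0_def exp_of_nat_mult[symmetric] mult.assoc)
  have "psd \<rho>0"
    using assms(3) by (simp add: density_iff_psd)
  then have init: "psd (\<rho>0 - Re (\<rho>0 $ 2 $ 2) *\<^sub>R mat 1)" "0 \<le> Re (\<rho>0 $ 2 $ 2)"
    using assms(4-6) by (simp_all add: diagonal_psd_minus_mat_1 psd_diag)
  have "\<forall>U L k. (\<forall>j. unitary_op (U j) \<and> dephasing_thermalization \<beta> E (L j)) \<longrightarrow>
      p0 (state U L \<rho>0 k) \<le> p0 (state (\<lambda>_. pauliX) (\<lambda>_. beta_swap \<beta> E) \<rho>0 k)"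
    unfolding swap using assms(3) init \<open>0 \<le> \<beta> * E\<close>
    by (intro allI impI p0_state_le) (auto simp: dephasing_thermalization_def)
  moreover have "(\<lambda>k. 1 - exp (- \<beta> * E) ^ k * Re (\<rho>0 $ 2 $ 2)) \<longlonglongrightarrow> 1"
    using LIMSEQ_realpow_zero[of "exp (- \<beta> * E)"] \<open>exp (- \<beta> * E) < 1\<close>
    by (auto intro!: tendsto_eq_intros)
  then have "(\<lambda>k. p0 (state (\<lambda>_. pauliX) (\<lambda>_. beta_swap \<beta> E) \<rho>0 k)) \<longlonglongrightarrow> 1"
    by (simp only: swap)
  moreover have "\<forall>k. p0 (state (\<lambda>_. pauliX) (\<lambda>_. beta_swap \<beta> E) \<rho>0 k)
      = 1 - exp (- real k * \<beta> * E) * (1 - p0 \<rho>0)"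
    using p0_swap_protocol[OF assms(3)] by blast
  ultimately show ?thesis
    using pauliX_unitary dephasing_thermalization_beta_swap[OF \<open>0 \<le> \<beta> * E\<close>]
    by (intro conjI) assumption+
qed

end
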